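(* Let $R>r\ge1$ and let $f,g:\mathbb{D}_{R}\to\mathbb{C}$ be analytic in $\mathbb{D}_{R}=\{z\in\mathbb{C}:|z|<R\}$, $f(z)=\sum_{k=0}^{\infty}a_{k}z^{k}$, $g(z)=\sum_{k=0}^{\infty}b_{k}z^{k}$. Then there is a constant $C(r,f,g)$, independent of $n$, such that for all $n\in\mathbb{N}$ and all $|z|\le r$, $$\left|U_{n}(fg)(z)-U_{n}(f)(z)U_{n}(g)(z)-\frac{2z(1-z)f'(z)g'(z)}{n}\right|\le\frac{C(r,f,g)}{n^{2}}.$$
   Context: The complex genuine Bernstein-Durrmeyer polynomials of a function $h$ continuous on $[0,1]$ are $$U_{n}(h)(z)=(n-1)\sum_{k=1}^{n-1}\Big(\int_{0}^{1}h(t)p_{n-2,k-1}(t)\,dt\Big)p_{n,k}(z)+(1-z)^{n}h(0)+z^{n}h(1),\quad z\in\mathbb{C},$$ where $p_{n,k}(z)=\binom{n}{k}z^{k}(1-z)^{n-k}$. *)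

theory Defs
  imports "HOL-Complex_Analysis.Complex_Analysis"
begin

definition bern :: "nat \<Rightarrow> nat \<Rightarrow> complex \<Rightarrow> complex" where
  "bern n k z = of_nat (n choose k) * z ^ k * (1 - z) ^ (n - k)"

text \<open>Complex genuine Bernstein-Durrmeyer polynomial U_n(h)(z), for h : [0,1] -> C
  (given as a function on the reals; only its values on [0,1] matter).\<close>
definition gbd :: "nat \<Rightarrow> (real \<Rightarrow> complex) \<Rightarrow> complex \<Rightarrow> complex" where
  "gbd n h z =
     of_nat (n - 1) * (\<Sum>k=1..n-1.
        integral {0..1} (\<lambda>t. h t * bern (n - 2) (k - 1) (complex_of_real t)) * bern n k z)
     + (1 - z) ^ n * h 0 + z ^ n * h 1"

end

theory Submission
  imports Defs "HOL-Real_Asymp.Real_Asymp"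
begin

text \<open>
  By the Beta integral, U_n maps t^k to a combination of Bernstein polynomials whose coefficients
  are ratios of rising factorials; rewriting rising factorials through Lah numbers gives
  U_n(t^k)(z) = \<Sum>m\<le>k c_{n,k,m} z^m with nonnegative coefficients summing to 1, all but the
  top two of which add up to O(k^4/n^2).  Hence U_n(t^k) = z^k + z(1-z)(z^k)''/n + O(k^4 r^k/n^2) on
  |z| \<le> r, and the Leibniz rule for second derivatives turns this into
  U_n(t^(k+j)) - U_n(t^k) U_n(t^j) = 2z(1-z)(z^k)'(z^j)'/n + O(k^6 j^6 r^(k+j)/n^2).
  Bilinearity extends the estimate to Taylor polynomials of f and g with a constant controlled by
  \<Sum>|a_k|(k+1)^6 r^k, which is finite by Cauchy's estimates on a circle of radius between r and R;
  dominated convergence then lets the Taylor polynomials tend to f and g inside U_n.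
\<close>

section \<open>Falling factorials and Lah numbers\<close>

definition ffact :: "real \<Rightarrow> nat \<Rightarrow> real" where
  "ffact x m = (\<Prod>i<m. x - real i)"

fun lah :: "nat \<Rightarrow> nat \<Rightarrow> nat" where
  "lah 0 m = (if m = 0 then 1 else 0)"
| "lah (Suc k) m = (if m = 0 then 0 else lah k (m - 1)) + (m + k) * lah k m"

lemma ffact_Suc: "ffact x (Suc m) = ffact x m * (x - real m)"
  by (simp add: ffact_def)

lemma ffact_Suc_left: "ffact x (Suc m) = x * ffact (x - 1) m"
  unfolding ffact_def by (subst prod.lessThan_Suc_shift) (simp add: algebra_simps)

lemma ffact_of_nat_eq_0: "n < m \<Longrightarrow> ffact (real n) m = 0"
  unfolding ffact_def by (rule prod_zero) auto

lemma ffact_of_nat_nonneg: "ffact (real n) m \<ge> 0"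
proof (cases "m \<le> n")
  case True
  then show ?thesis unfolding ffact_def by (intro prod_nonneg) auto
qed (simp add: ffact_of_nat_eq_0)

lemma lah_eq_0: "k < m \<Longrightarrow> lah k m = 0"
  by (induction k arbitrary: m) auto

lemma lah_diag: "lah k k = 1"
  by (induction k) (auto simp: lah_eq_0)

lemma lah_Suc_subdiag: "lah (Suc k) k = Suc k * k"
  by (induction k) (simp_all add: lah_diag)

lemma pochhammer_eq_sum_lah_ffact:
  "pochhammer x k = (\<Sum>m\<le>k. real (lah k m) * ffact x m)"
proof (induction k)
  case (Suc k)
  have "pochhammer x (Suc k) = (\<Sum>m\<le>k. real (lah k m) * ffact x (Suc m))
          + (\<Sum>m\<le>k. real (lah k m) * (real m + real k) * ffact x m)"
    unfolding pochhammer_Suc Suc sum_distrib_right sum.distrib[symmetric]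
    by (rule sum.cong) (simp_all add: ffact_Suc algebra_simps)
  also have "(\<Sum>m\<le>k. real (lah k m) * ffact x (Suc m))
      = (\<Sum>m\<le>Suc k. real (if m = 0 then 0 else lah k (m - 1)) * ffact x m)"
    by (subst sum.atMost_Suc_shift) simp
  also have "(\<Sum>m\<le>k. real (lah k m) * (real m + real k) * ffact x m)
      = (\<Sum>m\<le>Suc k. real ((m + k) * lah k m) * ffact x m)"
    by (simp add: lah_eq_0 algebra_simps)
  finally show ?case
    by (simp add: sum.distrib[symmetric] algebra_simps)
qed (simp add: ffact_def)

lemma fact_add_eq_fact_mult_pochhammer:
  "fact (j + k) = (fact j * pochhammer (real j + 1) k :: real)"
  using pochhammer_product'[of "1::real" j k] by (simp add: pochhammer_fact add.commute)

section \<open>Moments of the operator\<close>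

lemma Suc_mult_bern_Suc:
  "of_nat (Suc i) * bern (Suc n) (Suc i) z = of_nat (Suc n) * z * bern n i z"
proof -
  have "of_nat (Suc i) * of_nat (Suc n choose Suc i) = (of_nat (Suc n) * of_nat (n choose i) :: complex)"
    by (metis Suc_times_binomial of_nat_mult)
  then show ?thesis
    unfolding bern_def by (simp add: mult_ac)
qed

lemma sum_bern_ffact:
  "(\<Sum>j\<le>n. bern n j z * of_real (ffact (real j) m)) = of_real (ffact (real n) m) * z ^ m"
proof (induction m arbitrary: n)
  case 0
  have "(\<Sum>j\<le>n. bern n j z) = (z + (1 - z)) ^ n"
    unfolding bern_def binomial_ring by simp
  then show ?case by (simp add: ffact_def)
next
  case (Suc m)
  show ?case
  proof (cases n)
    case (Suc n')
    have "(\<Sum>j\<le>n. bern n j z * of_real (ffact (real j) (Suc m)))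
        = (\<Sum>i\<le>n'. (of_nat (Suc i) * bern (Suc n') (Suc i) z) * of_real (ffact (real i) m))"
      unfolding Suc by (subst sum.atMost_Suc_shift) (simp add: ffact_Suc_left mult_ac)
    also have "\<dots> = of_nat (Suc n') * z * (\<Sum>i\<le>n'. bern n' i z * of_real (ffact (real i) m))"
      by (simp only: Suc_mult_bern_Suc sum_distrib_left mult_ac)
    also have "\<dots> = of_real (ffact (real n) (Suc m)) * z ^ Suc m"
      unfolding Suc.IH Suc by (simp add: ffact_Suc_left)
    finally show ?thesis .
  qed (simp add: ffact_Suc_left bern_def)
qed

lemma sum_bern_pochhammer:
  "(\<Sum>j\<le>n. bern n j z * of_real (pochhammer (real j) k))
     = (\<Sum>m\<le>k. of_real (real (lah k m) * ffact (real n) m) * z ^ m)"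
proof -
  have "(\<Sum>j\<le>n. bern n j z * of_real (pochhammer (real j) k))
      = (\<Sum>m\<le>k. of_real (real (lah k m)) * (\<Sum>j\<le>n. bern n j z * of_real (ffact (real j) m)))"
    by (simp add: pochhammer_eq_sum_lah_ffact sum_distrib_left algebra_simps sum.swap[of _ "{..n}"])
  then show ?thesis
    by (simp add: sum_bern_ffact mult.assoc)
qed

lemma has_integral_power_mult_power_one_minus:
  "((\<lambda>t::real. t ^ a * (1 - t) ^ b) has_integral (fact a * fact b / fact (a + b + 1))) {0..1}"
proof -
  have "((\<lambda>t. t powr (real a + 1 - 1) * (1 - t) powr (real b + 1 - 1))
          has_integral Beta (real a + 1) (real b + 1)) {0..1}"
    by (rule has_integral_Beta_real) auto
  moreover have "Beta (real a + 1) (real b + 1) = fact a * fact b / fact (a + b + 1)"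
  proof -
    have "Gamma (real a + 1) = fact a" "Gamma (real b + 1) = fact b"
      "Gamma (real a + 1 + (real b + 1)) = fact (a + b + 1)"
      using Gamma_fact[of a] Gamma_fact[of b] Gamma_fact[of "a + b + 1"] by (simp_all add: add_ac)
    then show ?thesis by (simp add: Beta_def)
  qed
  ultimately have "((\<lambda>t. t powr real a * (1 - t) powr real b)
                     has_integral (fact a * fact b / fact (a + b + 1))) {0..1}"
    by simp
  then show ?thesis
    by (rule has_integral_spike_finite[of "{0, 1}", rotated 2]) (auto simp: powr_realpow)
qed

lemma integral_power_mult_bern:
  assumes "i \<le> m"
  shows "of_nat (Suc m) * integral {0..1} (\<lambda>t. of_real t ^ k * bern m i (of_real t))
       = of_real (pochhammer (real i + 1) k / pochhammer (real m + 2) k)"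
proof -
  define I where "I = real (m choose i) * (fact (k + i) * fact (m - i) / fact (m + k + 1))"
  have "((\<lambda>t. real (m choose i) * (t ^ (k + i) * (1 - t) ^ (m - i))) has_integral I) {0..1}"
    unfolding I_def using has_integral_power_mult_power_one_minus[of "k + i" "m - i"] assms
    by (intro has_integral_mult_right) (simp add: add_ac)
  from has_integral_of_real[OF this, where 'b = complex]
  have "integral {0..1} (\<lambda>t. of_real t ^ k * bern m i (of_real t)) = of_real I"
    by (intro integral_unique) (simp add: bern_def power_add algebra_simps)
  moreover have "real (Suc m) * I = pochhammer (real i + 1) k / pochhammer (real m + 2) k"
  proof -
    have "real (Suc m) * I = fact (Suc m) * fact (i + k) / (fact i * fact (Suc m + k))"
      using assms by (simp add: I_def binomial_fact add_ac field_simps)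
    also have "\<dots> = (fact (Suc m) * fact i * pochhammer (real i + 1) k)
                     / (fact (Suc m) * fact i * pochhammer (real m + 2) k)"
      by (simp only: fact_add_eq_fact_mult_pochhammer) (simp add: ac_simps)
    finally show ?thesis
      by simp
  qed
  ultimately show ?thesis
    by (metis of_real_mult of_real_of_nat_eq)
qed

lemma gbd_power_eq_sum_bern:
  assumes "n \<ge> 1"
  shows "gbd n (\<lambda>t. of_real t ^ k) z
       = (\<Sum>j\<le>n. bern n j z * of_real (pochhammer (real j) k / pochhammer (real n) k))"
proof -
  obtain m where n: "n = Suc m"
    using assms by (cases n) auto
  have pos: "pochhammer (real n) k > 0"
    using assms by (intro pochhammer_pos) auto
  have inner: "of_nat (n - 1) * integral {0..1} (\<lambda>t. of_real t ^ k * bern (n - 2) i (of_real t))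
             = of_real (pochhammer (real (Suc i)) k / pochhammer (real n) k)" if "i < m" for i
    using integral_power_mult_bern[of i "m - 1" k] that by (simp add: n of_nat_diff add_ac)
  have ivl: "{1..n - 1} = {Suc 0..m}"
    by (simp add: n)
  have "gbd n (\<lambda>t. of_real t ^ k) z
      = (\<Sum>i<m. of_nat (n - 1) * integral {0..1} (\<lambda>t. of_real t ^ k * bern (n - 2) i (of_real t))
                 * bern n (Suc i) z) + (1 - z) ^ n * 0 ^ k + z ^ n"
    unfolding gbd_def ivl sum.atLeast1_atMost_eq sum_distrib_left by (simp add: mult_ac)
  also have "\<dots> = (\<Sum>i<m. bern n (Suc i) z * of_real (pochhammer (real (Suc i)) k / pochhammer (real n) k))
        + (1 - z) ^ n * 0 ^ k + z ^ n"
    by (intro arg_cong2[where f = "(+)"] refl sum.cong) (simp_all add: inner[simplified] mult.commute)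
  also have "\<dots> = (\<Sum>j\<le>n. bern n j z * of_real (pochhammer (real j) k / pochhammer (real n) k))"
  proof -
    have "bern n 0 z = (1 - z) ^ n" "bern n n z = z ^ n"
      by (simp_all add: bern_def)
    moreover have "(\<Sum>j\<le>n. h j) = h 0 + (\<Sum>i<m. h (Suc i)) + h n" for h :: "nat \<Rightarrow> complex"
      unfolding n sum.atMost_Suc_shift by (simp flip: lessThan_Suc_atMost add: add_ac)
    ultimately show ?thesis
      using pos by (simp add: pochhammer_0_left add_ac)
  qed
  finally show ?thesis .
qed

definition moment_coeff :: "nat \<Rightarrow> nat \<Rightarrow> nat \<Rightarrow> real" where
  "moment_coeff n k m = real (lah k m) * ffact (real n) m / pochhammer (real n) k"

lemma gbd_power_eq:
  assumes "n \<ge> 1"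
  shows "gbd n (\<lambda>t. of_real t ^ k) z = (\<Sum>m\<le>k. of_real (moment_coeff n k m) * z ^ m)"
proof -
  have "gbd n (\<lambda>t. of_real t ^ k) z
      = (\<Sum>j\<le>n. bern n j z * of_real (pochhammer (real j) k)) / of_real (pochhammer (real n) k)"
    using gbd_power_eq_sum_bern[OF assms] by (simp add: sum_divide_distrib)
  then show ?thesis
    by (simp add: sum_bern_pochhammer sum_divide_distrib moment_coeff_def)
qed

lemma moment_coeff_nonneg: "n \<ge> 1 \<Longrightarrow> moment_coeff n k m \<ge> 0"
  unfolding moment_coeff_def using ffact_of_nat_nonneg[of n m] pochhammer_pos[of "real n" k] by simp

lemma sum_moment_coeff: "n \<ge> 1 \<Longrightarrow> (\<Sum>m\<le>k. moment_coeff n k m) = 1"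
  unfolding moment_coeff_def using pochhammer_eq_sum_lah_ffact[of "real n" k] pochhammer_pos[of "real n" k]
  by (simp add: sum_divide_distrib[symmetric])

section \<open>Asymptotics of the moments\<close>

lemma prod_one_minus_bounds:
  fixes a :: "nat \<Rightarrow> real"
  assumes "\<And>i. i < k \<Longrightarrow> 0 \<le> a i \<and> a i \<le> 1"
  shows "1 - (\<Sum>i<k. a i) \<le> (\<Prod>i<k. 1 - a i)
         \<and> (\<Prod>i<k. 1 - a i) \<le> 1 - (\<Sum>i<k. a i) + (\<Sum>i<k. a i)\<^sup>2"
  using assms
proof (induction k)
  case (Suc k)
  define P where "P = (\<Prod>i<k. 1 - a i)"
  define S where "S = (\<Sum>i<k. a i)"
  define b where "b = a k"
  have IH: "1 - S \<le> P" "P \<le> 1 - S + S\<^sup>2"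
    using Suc by (auto simp: P_def S_def)
  have b: "0 \<le> b" "b \<le> 1"
    using Suc.prems by (auto simp: b_def)
  have S: "0 \<le> S"
    unfolding S_def using Suc.prems by (intro sum_nonneg) auto
  have "0 \<le> S * b + b * b + S\<^sup>2 * b"
    using S b by (intro add_nonneg_nonneg mult_nonneg_nonneg) auto
  have "1 - (S + b) \<le> (1 - S) * (1 - b)"
    using S b by (simp add: algebra_simps)
  also have "\<dots> \<le> P * (1 - b)"
    using IH b by (intro mult_right_mono) auto
  finally have lower: "1 - (S + b) \<le> P * (1 - b)" .
  have "P * (1 - b) \<le> (1 - S + S\<^sup>2) * (1 - b)"
    using IH b by (intro mult_right_mono) auto
  also have "\<dots> = 1 - (S + b) + (S + b)\<^sup>2 - (S * b + b * b + S\<^sup>2 * b)"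
    by (simp add: power2_eq_square algebra_simps)
  also have "\<dots> \<le> 1 - (S + b) + (S + b)\<^sup>2"
    using \<open>0 \<le> S * b + b * b + S\<^sup>2 * b\<close> by linarith
  finally show ?case
    using lower by (simp add: P_def S_def b_def add.commute)
qed simp

lemma ffact_div_pochhammer_eq_prod:
  assumes "n \<ge> 1"
  shows "ffact (real n) k / pochhammer (real n) k = (\<Prod>i<k. 1 - 2 * real i / (real n + real i))"
  unfolding ffact_def pochhammer_prod atLeast0LessThan prod_dividef[symmetric]
proof (rule prod.cong)
  fix i assume "i \<in> {..<k}"
  have "real n + real i > 0" using assms by simp
  then show "(real n - real i) / (real n + of_nat i) = 1 - 2 * real i / (real n + real i)"
    by (simp add: field_simps)
qed simp

lemma ffact_div_pochhammer_le_1: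
  assumes "n \<ge> 1"
  shows "ffact (real n) k / pochhammer (real n) k \<le> 1"
proof (cases "k \<le> n")
  case True
  then show ?thesis
    unfolding ffact_div_pochhammer_eq_prod[OF assms]
    using assms by (intro prod_le_1) (auto simp: field_simps)
qed (simp add: ffact_of_nat_eq_0)

lemma ffact_div_pochhammer_bounds:
  assumes n: "n \<ge> 1" and "k \<le> n"
  defines "x \<equiv> real (k * (k - 1)) / real n"
  shows "1 - x \<le> ffact (real n) k / pochhammer (real n) k"
    and "ffact (real n) k / pochhammer (real n) k \<le> 1 - x + 3 * real k ^ 4 / real n ^ 2"
proof -
  define a where "a i = 2 * real i / (real n + real i)" for i
  define S where "S = (\<Sum>i<k. a i)"
  have a: "0 \<le> a i \<and> a i \<le> 1" if "i < k" for i
    using that \<open>k \<le> n\<close> by (auto simp: a_def field_simps)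
  have x: "x = (\<Sum>i<k. 2 * real i / real n)"
  proof -
    have "(\<Sum>i<k. 2 * real i) = real (k * (k - 1))"
      by (induction k) (auto simp: algebra_simps of_nat_diff)
    then show ?thesis
      unfolding x_def by (simp add: sum_divide_distrib[symmetric])
  qed
  have "S \<le> x"
    unfolding S_def a_def x using n by (intro sum_mono frac_le) auto
  have "x - S \<le> 2 * real k ^ 3 / real n ^ 2"
  proof -
    have "2 * real i / real n - a i \<le> 2 * real k ^ 2 / real n ^ 2" if "i < k" for i
    proof -
      have "2 * real i / real n - a i = 2 * real i ^ 2 / (real n * (real n + real i))"
        unfolding a_def using n by (simp add: field_simps power2_eq_square)
      also have "\<dots> \<le> 2 * real i ^ 2 / (real n * real n)"
        using n by (intro divide_left_mono mult_left_mono mult_pos_pos) auto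
      also have "\<dots> \<le> 2 * real k ^ 2 / real n ^ 2"
        using that by (auto simp: power2_eq_square intro!: divide_right_mono mult_mono)
      finally show ?thesis .
    qed
    then have "x - S \<le> (\<Sum>i<k. 2 * real k ^ 2 / real n ^ 2)"
      unfolding x S_def sum_subtractf[symmetric] by (intro sum_mono) auto
    then show ?thesis
      by (simp add: power2_eq_square power3_eq_cube mult_ac)
  qed
  have "S\<^sup>2 \<le> real k ^ 4 / real n ^ 2"
  proof -
    have "0 \<le> S"
      unfolding S_def using a by (intro sum_nonneg) auto
    then have "S\<^sup>2 \<le> x\<^sup>2"
      using \<open>S \<le> x\<close> by (intro power_mono)
    also have "x \<le> real k ^ 2 / real n"
      unfolding x_def by (intro divide_right_mono) (auto simp: power2_eq_square intro: mult_left_mono)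
    then have "x\<^sup>2 \<le> (real k ^ 2 / real n)\<^sup>2"
      unfolding x_def by (intro power_mono) auto
    finally show ?thesis
      by (simp add: power_divide flip: power_mult)
  qed
  moreover have "real k ^ 3 \<le> real k ^ 4"
    by (cases k) (auto intro!: power_increasing)
  then have "2 * real k ^ 3 / real n ^ 2 \<le> 2 * real k ^ 4 / real n ^ 2"
    by (intro divide_right_mono) auto
  moreover have "1 - S \<le> (\<Prod>i<k. 1 - a i)" "(\<Prod>i<k. 1 - a i) \<le> 1 - S + S\<^sup>2"
    using prod_one_minus_bounds[of k a, OF a] unfolding S_def by auto
  ultimately show "1 - x \<le> ffact (real n) k / pochhammer (real n) k"
    and "ffact (real n) k / pochhammer (real n) k \<le> 1 - x + 3 * real k ^ 4 / real n ^ 2"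
    using \<open>S \<le> x\<close> \<open>x - S \<le> 2 * real k ^ 3 / real n ^ 2\<close>
    unfolding ffact_div_pochhammer_eq_prod[OF n] a_def by linarith+
qed

lemma ffact_div_pochhammer_approx:
  assumes n: "n \<ge> 1"
  shows "\<bar>ffact (real n) k / pochhammer (real n) k - 1 + real (k * (k - 1)) / real n\<bar>
           \<le> 3 * real k ^ 4 / real n ^ 2"
proof (cases "k \<le> n")
  case True
  then show ?thesis
    using ffact_div_pochhammer_bounds[OF n True] by (simp add: abs_le_iff)
next
  case False
  define x where "x = real (k * (k - 1)) / real n"
  have "n \<le> 1 * (k - 1)"
    using False by simp
  also have "\<dots> \<le> k * (k - 1)"
    using False by (intro mult_le_mono1) simp
  finally have "real n \<le> real (k * (k - 1))"
    by (simp only: of_nat_le_iff)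
  then have "real n / real n \<le> x"
    unfolding x_def by (intro divide_right_mono) simp_all
  then have "1 \<le> x"
    using n by simp
  have "x \<le> x\<^sup>2"
    using \<open>1 \<le> x\<close> by (simp add: power2_eq_square mult_le_cancel_left1)
  then have "\<bar>0 - 1 + x\<bar> \<le> x\<^sup>2"
    using \<open>1 \<le> x\<close> by simp
  also have "x \<le> real k ^ 2 / real n"
    unfolding x_def by (intro divide_right_mono) (auto simp: power2_eq_square intro: mult_left_mono)
  then have "x\<^sup>2 \<le> (real k ^ 2 / real n)\<^sup>2"
    using \<open>1 \<le> x\<close> by (intro power_mono) auto
  finally show ?thesis
    using False by (simp add: ffact_of_nat_eq_0 x_def power_divide flip: power_mult)
qed

lemma moment_coeff_subdiag_approx:
  assumes n: "n \<ge> 1"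
  shows "\<bar>moment_coeff n (Suc k) k - real (Suc k * k) / real n\<bar> \<le> real (Suc k) ^ 4 / real n ^ 2"
proof -
  define x where "x = real (Suc k * k) / real n"
  define c where "c = real n / (real n + real k)"
  define R where "R = ffact (real n) k / pochhammer (real n) k"
  have c: "0 < c" "c \<le> 1"
    using n by (auto simp: c_def)
  have "pochhammer (real n) k > 0"
    using n by (intro pochhammer_pos) simp
  then have R: "0 \<le> R" "R \<le> 1"
    using ffact_of_nat_nonneg[of n k] ffact_div_pochhammer_le_1[OF n] by (auto simp: R_def)
  have "moment_coeff n (Suc k) k
        = real (Suc k * k) * ffact (real n) k / (pochhammer (real n) k * (real n + real k))"
    by (simp only: moment_coeff_def lah_Suc_subdiag pochhammer_Suc of_nat_mult)
  also have "\<dots> = x * (c * R)"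
  proof -
    have "q * F / (P * (a + b)) = q / a * (a / (a + b) * (F / P))"
      if "a > 0" "P > 0" "b \<ge> 0" for q F P a b :: real
      using that by (simp add: field_simps add_pos_nonneg)
    then show ?thesis
      unfolding x_def c_def R_def using n \<open>pochhammer (real n) k > 0\<close> by simp
  qed
  finally have "moment_coeff n (Suc k) k = x * (c * R)" .
  moreover have "1 - c * R \<le> real k ^ 2 / real n"
  proof (cases "k \<le> n")
    case True
    have "1 - real (k * (k - 1)) / real n \<le> R"
      unfolding R_def by (rule ffact_div_pochhammer_bounds(1)[OF n True])
    then have "c * (1 - real (k * (k - 1)) / real n) \<le> c * R"
      using c by (intro mult_left_mono) auto
    then have "1 - c * R \<le> (1 - c) + c * (real (k * (k - 1)) / real n)"
      by (simp add: algebra_simps)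
    also have "\<dots> \<le> real k / real n + real (k * (k - 1)) / real n"
      using n c by (intro add_mono mult_left_le_one_le) (auto simp: c_def field_simps)
    also have "\<dots> = real k ^ 2 / real n"
      by (cases k) (simp_all add: power2_eq_square add_divide_distrib[symmetric] algebra_simps)
    finally show ?thesis .
  next
    case False
    then have "n \<le> k * k"
      using le_square[of k] by linarith
    then have "real n \<le> real k ^ 2"
      by (simp only: of_nat_le_iff power2_eq_square flip: of_nat_mult)
    then show ?thesis
      using False n by (simp add: R_def ffact_of_nat_eq_0)
  qed
  moreover have "x * (real k ^ 2 / real n) \<le> real (Suc k) ^ 4 / real n ^ 2"
  proof -
    have "x * (real k ^ 2 / real n) = real (Suc k) * real k ^ 3 / real n ^ 2"
      by (simp add: x_def power2_eq_square power3_eq_cube algebra_simps)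
    also have "\<dots> \<le> real (Suc k) * real (Suc k) ^ 3 / real n ^ 2"
      by (intro divide_right_mono mult_left_mono power_mono) auto
    finally show ?thesis
      by (simp add: power_Suc[symmetric] del: power_Suc of_nat_Suc)
  qed
  moreover have "0 \<le> x" "c * R \<le> 1"
    using c R by (auto simp: x_def mult_le_one)
  ultimately have "x * (c * R) \<le> x" "x * (1 - c * R) \<le> real (Suc k) ^ 4 / real n ^ 2"
    by (auto simp: mult_left_le intro: order_trans[OF mult_left_mono])
  then show ?thesis
    unfolding x_def[symmetric] \<open>moment_coeff n (Suc k) k = x * (c * R)\<close>
    by (simp add: abs_le_iff algebra_simps)
qed

lemma norm_power_le_pow:
  assumes "norm (z::complex) \<le> r" "1 \<le> r" "m \<le> k"
  shows "norm z ^ m \<le> r ^ k"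
proof -
  have "norm z ^ m \<le> r ^ m"
    using assms by (intro power_mono) auto
  also have "\<dots> \<le> r ^ k"
    using assms by (intro power_increasing) auto
  finally show ?thesis .
qed

lemma norm_sum_coeff_power_le:
  fixes z :: complex
  assumes "\<And>m. m \<in> A \<Longrightarrow> 0 \<le> c m \<and> m \<le> k" and "norm z \<le> r" "1 \<le> r"
  shows "norm (\<Sum>m\<in>A. of_real (c m) * z ^ m) \<le> (\<Sum>m\<in>A. c m) * r ^ k"
proof -
  have "norm (\<Sum>m\<in>A. of_real (c m) * z ^ m) \<le> (\<Sum>m\<in>A. norm (of_real (c m) * z ^ m))"
    by (rule norm_sum)
  also have "\<dots> \<le> (\<Sum>m\<in>A. c m * r ^ k)"
    using assms norm_power_le_pow[OF assms(2,3)]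
    by (intro sum_mono) (simp add: norm_mult norm_power mult_left_mono)
  finally show ?thesis
    by (simp add: sum_distrib_right)
qed

lemma norm_gbd_power_le:
  assumes "n \<ge> 1" "norm z \<le> r" "1 \<le> r"
  shows "norm (gbd n (\<lambda>t. of_real t ^ k) z) \<le> r ^ k"
  using norm_sum_coeff_power_le[of "{..k}" "moment_coeff n k" k z r] assms
  by (simp add: gbd_power_eq sum_moment_coeff moment_coeff_nonneg)

text \<open>z(1-z)/n times the second derivative of z^k.\<close>
definition power_correction :: "nat \<Rightarrow> complex \<Rightarrow> nat \<Rightarrow> complex" where
  "power_correction n z k = of_nat (k * (k - 1)) / of_nat n * (z ^ (k - 1) - z ^ k)"

lemma gbd_power_approx:
  assumes n: "n \<ge> 1" and z: "norm z \<le> r" and r: "1 \<le> r"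
  shows "norm (gbd n (\<lambda>t. of_real t ^ k) z - z ^ k - power_correction n z k)
           \<le> 8 * real k ^ 4 * r ^ k / real n ^ 2"
proof (cases "k \<le> 1")
  case True
  then have "moment_coeff n k k = 1" "\<forall>m<k. moment_coeff n k m = 0"
    using sum_moment_coeff[OF n, of k] by (auto simp: moment_coeff_def le_Suc_eq)
  then have "gbd n (\<lambda>t. of_real t ^ k) z = z ^ k"
    using True by (auto simp: gbd_power_eq[OF n] le_Suc_eq)
  then show ?thesis
    using True r by (auto simp: power_correction_def le_Suc_eq)
next
  case False
  then obtain p where k: "k = Suc (Suc p)"
    by (metis One_nat_def not_less_eq_eq not0_implies_Suc le0)
  define x where "x = real (k * (k - 1)) / real n"
  define K where "K = real k ^ 4 / real n ^ 2"
  define T where "T = (\<Sum>m\<le>p. moment_coeff n k m)"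
  have sub: "\<bar>moment_coeff n k (Suc p) - x\<bar> \<le> K"
    using moment_coeff_subdiag_approx[OF n, of "Suc p"] by (simp add: k x_def K_def)
  have diag: "\<bar>moment_coeff n k k - 1 + x\<bar> \<le> 3 * K"
    using ffact_div_pochhammer_approx[OF n, of k] by (simp add: moment_coeff_def lah_diag x_def K_def)
  have split: "(\<Sum>m\<le>k. h m) = (\<Sum>m\<le>p. h m) + h (Suc p) + h k" for h :: "nat \<Rightarrow> 'a::comm_monoid_add"
    unfolding k by (simp add: add_ac)
  have "T + moment_coeff n k (Suc p) + moment_coeff n k k = 1"
    using sum_moment_coeff[OF n, of k] unfolding T_def split .
  then have T: "T \<le> 4 * K"
    using sub diag by (simp add: abs_le_iff)
  have "gbd n (\<lambda>t. of_real t ^ k) z - z ^ k - power_correction n z k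
      = (\<Sum>m\<le>p. of_real (moment_coeff n k m) * z ^ m)
        + of_real (moment_coeff n k (Suc p) - x) * z ^ Suc p
        + of_real (moment_coeff n k k - 1 + x) * z ^ k"
    unfolding gbd_power_eq[OF n] split power_correction_def x_def using n by (simp add: k field_simps)
  also have "norm \<dots> \<le> T * r ^ k + K * r ^ k + 3 * K * r ^ k"
  proof (intro norm_triangle_le add_mono)
    show "norm (\<Sum>m\<le>p. of_real (moment_coeff n k m) * z ^ m) \<le> T * r ^ k"
      unfolding T_def using moment_coeff_nonneg[OF n] k z r by (intro norm_sum_coeff_power_le) auto
    show "norm (of_real (moment_coeff n k (Suc p) - x) * z ^ Suc p) \<le> K * r ^ k"
      unfolding norm_mult norm_of_real norm_power
      using sub norm_power_le_pow[OF z r, of "Suc p" k] k by (intro mult_mono) auto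
    show "norm (of_real (moment_coeff n k k - 1 + x) * z ^ k) \<le> 3 * K * r ^ k"
      unfolding norm_mult norm_of_real norm_power
      using diag norm_power_le_pow[OF z r, of k k] by (intro mult_mono) auto
  qed
  also have "\<dots> \<le> 8 * K * r ^ k"
    using T r by (simp add: algebra_simps mult_right_mono)
  finally show ?thesis
    by (simp add: K_def)
qed

section \<open>The product defect for polynomials\<close>

text \<open>The Leibniz rule (fg)'' = f''g + 2f'g' + fg'' in disguise.\<close>
lemma power_correction_add:
  assumes "n \<ge> 1"
  shows "power_correction n z (k + j) - z ^ k * power_correction n z j - z ^ j * power_correction n z k
       = 2 * z * (1 - z) * (of_nat k * z ^ (k - 1)) * (of_nat j * z ^ (j - 1)) / of_nat n"
proof (cases "k = 0 \<or> j = 0")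
  case False
  then obtain a b where "k = Suc a" "j = Suc b"
    by (metis not0_implies_Suc)
  then show ?thesis
    unfolding power_correction_def using assms by (simp add: power_add field_simps)
qed (auto simp: power_correction_def)

lemma norm_power_correction_le:
  assumes "n \<ge> 1" "norm z \<le> r" "1 \<le> r"
  shows "norm (power_correction n z k) \<le> 2 * real k ^ 2 * r ^ k / real n"
proof -
  have "real (k * (k - 1)) \<le> real k ^ 2"
    by (simp add: power2_eq_square mult_left_mono)
  then have "norm (of_nat (k * (k - 1)) / (of_nat n :: complex)) \<le> real k ^ 2 / real n"
    by (simp add: norm_divide divide_right_mono del: of_nat_mult)
  moreover have "norm (z ^ (k - 1) - z ^ k) \<le> 2 * r ^ k"
    using norm_triangle_ineq4[of "z ^ (k - 1)" "z ^ k"] norm_power_le_pow[OF assms(2,3), of "k - 1" k]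
      norm_power_le_pow[OF assms(2,3), of k k]
    by (simp add: norm_power)
  ultimately have "norm (power_correction n z k) \<le> real k ^ 2 / real n * (2 * r ^ k)"
    unfolding power_correction_def norm_mult by (intro mult_mono) auto
  then show ?thesis
    by (simp add: ac_simps)
qed

definition product_defect ::
    "nat \<Rightarrow> (real \<Rightarrow> complex) \<Rightarrow> (real \<Rightarrow> complex) \<Rightarrow> complex \<Rightarrow> complex \<Rightarrow> complex \<Rightarrow> complex" where
  "product_defect n F G dF dG z =
     gbd n (\<lambda>t. F t * G t) z - gbd n F z * gbd n G z - 2 * z * (1 - z) * dF * dG / of_nat n"

lemma norm_product_defect_power_le:
  assumes n: "n \<ge> 1" and z: "norm z \<le> r" and r: "1 \<le> r"
  shows "norm (product_defect n (\<lambda>t. of_real t ^ k) (\<lambda>t. of_real t ^ j)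
                 (of_nat k * z ^ (k - 1)) (of_nat j * z ^ (j - 1)) z)
         \<le> 44 * (real k + 1) ^ 6 * (real j + 1) ^ 6 * r ^ (k + j) / real n ^ 2"
proof -
  let ?M = "\<lambda>m. gbd n (\<lambda>t. of_real t ^ m) z"
  let ?c = "power_correction n z"
  define e where "e m = ?M m - z ^ m - ?c m" for m
  define P where "P = (real k + 1) * (real j + 1)"
  define B where "B = r ^ (k + j) / real n ^ 2"
  have B: "B \<ge> 0"
    unfolding B_def using r by simp
  have e_le: "norm (e m) \<le> 8 * real m ^ 4 * r ^ m / real n ^ 2" for m
    unfolding e_def by (rule gbd_power_approx[OF n z r])
  have c: "norm (?c m) \<le> 2 * real m ^ 2 * r ^ m / real n" for m
    by (rule norm_power_correction_le[OF n z r])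
  have "1 * 1 \<le> P"
    unfolding P_def by (intro mult_mono) auto
  have kP: "real k \<le> P" and jP: "real j \<le> P" and kjP: "real (k + j) \<le> P"
    unfolding P_def by (simp_all add: algebra_simps)
  have P6: "a ^ i * b ^ l \<le> P ^ 6" if "0 \<le> a" "a \<le> P" "0 \<le> b" "b \<le> P" "i + l \<le> 6" for a b i l
  proof -
    have "a ^ i * b ^ l \<le> P ^ i * P ^ l"
      using that by (intro mult_mono power_mono) auto
    also have "\<dots> \<le> P ^ 6"
      unfolding power_add[symmetric] using \<open>1 * 1 \<le> P\<close> that by (intro power_increasing) auto
    finally show ?thesis .
  qed
  have "product_defect n (\<lambda>t. of_real t ^ k) (\<lambda>t. of_real t ^ j)
          (of_nat k * z ^ (k - 1)) (of_nat j * z ^ (j - 1)) z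
      = e (k + j) - z ^ k * e j - ?c k * ?c j - ?c k * e j - e k * ?M j"
    using power_correction_add[OF n, of z k j]
    unfolding product_defect_def e_def by (simp add: power_add[symmetric] algebra_simps)
  also have "norm \<dots> \<le> 8 * P ^ 6 * B + 8 * P ^ 6 * B + 4 * P ^ 6 * B + 16 * P ^ 6 * B + 8 * P ^ 6 * B"
  proof (intro norm_triangle_le_diff add_mono)
    have scale: "C * a * B \<le> C * P ^ 6 * B" if "a \<le> P ^ 6" "0 \<le> C" for a C
      using that B by (intro mult_right_mono mult_left_mono) auto
    have "norm (e (k + j)) \<le> 8 * real (k + j) ^ 4 * B"
      using e_le[of "k + j"] by (simp add: B_def)
    also have "\<dots> \<le> 8 * P ^ 6 * B"
      using P6[of "real (k + j)" "real (k + j)" 4 0] kjP by (intro scale) auto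
    finally show "norm (e (k + j)) \<le> 8 * P ^ 6 * B" .
    have "norm (z ^ k * e j) \<le> r ^ k * (8 * real j ^ 4 * r ^ j / real n ^ 2)"
      unfolding norm_mult norm_power using norm_power_le_pow[OF z r, of k k] e_le[of j] r
      by (intro mult_mono) auto
    also have "\<dots> = 8 * real j ^ 4 * B"
      by (simp add: B_def power_add)
    also have "\<dots> \<le> 8 * P ^ 6 * B"
      using P6[of "real j" "real j" 4 0] jP by (intro scale) auto
    finally show "norm (z ^ k * e j) \<le> 8 * P ^ 6 * B" .
    have "norm (?c k * ?c j) \<le> (2 * real k ^ 2 * r ^ k / real n) * (2 * real j ^ 2 * r ^ j / real n)"
      unfolding norm_mult using c[of k] c[of j] r by (intro mult_mono) auto
    also have "\<dots> = 4 * (real k ^ 2 * real j ^ 2) * B"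
      by (simp add: B_def power_add power2_eq_square)
    also have "\<dots> \<le> 4 * P ^ 6 * B"
      using P6[of "real k" "real j" 2 2] kP jP by (intro scale) auto
    finally show "norm (?c k * ?c j) \<le> 4 * P ^ 6 * B" .
    have "norm (?c k * e j) \<le> (2 * real k ^ 2 * r ^ k / real n) * (8 * real j ^ 4 * r ^ j / real n ^ 2)"
      unfolding norm_mult using c[of k] e_le[of j] r by (intro mult_mono) auto
    also have "\<dots> = 16 * (real k ^ 2 * real j ^ 4) * B / real n"
      by (simp add: B_def power_add mult_ac)
    also have "\<dots> \<le> 16 * (real k ^ 2 * real j ^ 4) * B"
      using divide_left_mono[of 1 "real n" "16 * (real k ^ 2 * real j ^ 4) * B"] n B by simp
    also have "\<dots> \<le> 16 * P ^ 6 * B"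
      using P6[of "real k" "real j" 2 4] kP jP by (intro scale) auto
    finally show "norm (?c k * e j) \<le> 16 * P ^ 6 * B" .
    have "norm (e k * ?M j) \<le> (8 * real k ^ 4 * r ^ k / real n ^ 2) * r ^ j"
      unfolding norm_mult using e_le[of k] norm_gbd_power_le[OF n z r, of j] r by (intro mult_mono) auto
    also have "\<dots> = 8 * real k ^ 4 * B"
      by (simp add: B_def power_add)
    also have "\<dots> \<le> 8 * P ^ 6 * B"
      using P6[of "real k" "real k" 4 0] kP by (intro scale) auto
    finally show "norm (e k * ?M j) \<le> 8 * P ^ 6 * B" .
  qed
  finally show ?thesis
    by (simp add: P_def B_def power_mult_distrib mult_ac)
qed

lemma continuous_on_bern: "continuous_on S (\<lambda>t. bern m i (complex_of_real t))"
  unfolding bern_def by (intro continuous_intros)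

lemma gbd_cmult: "gbd n (\<lambda>t. c * F t) z = c * gbd n F z"
  unfolding gbd_def by (simp add: sum_distrib_left algebra_simps)

lemma gbd_sum:
  assumes "finite I" "\<And>i. i \<in> I \<Longrightarrow> continuous_on {0..1} (F i)"
  shows "gbd n (\<lambda>t. \<Sum>i\<in>I. F i t) z = (\<Sum>i\<in>I. gbd n (F i) z)"
proof -
  have "integral {0..1} (\<lambda>t. (\<Sum>i\<in>I. F i t) * bern m j (complex_of_real t))
      = (\<Sum>i\<in>I. integral {0..1} (\<lambda>t. F i t * bern m j (complex_of_real t)))" for m j
    unfolding sum_distrib_right using assms
    by (intro integral_sum integrable_continuous_real continuous_intros continuous_on_bern) auto
  then show ?thesis
    unfolding gbd_def
    by (simp add: sum.distrib sum_distrib_left sum_distrib_right sum.swap[of _ I])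
qed

lemma gbd_sum_cmult:
  assumes "finite I" "\<And>i. i \<in> I \<Longrightarrow> continuous_on {0..1} (F i)"
  shows "gbd n (\<lambda>t. \<Sum>i\<in>I. c i * F i t) z = (\<Sum>i\<in>I. c i * gbd n (F i) z)"
  using assms by (subst gbd_sum) (auto simp: gbd_cmult intro!: continuous_intros)

lemma product_defect_sum:
  assumes "finite I" "finite J"
    and "\<And>i. i \<in> I \<Longrightarrow> continuous_on {0..1} (F i)" "\<And>j. j \<in> J \<Longrightarrow> continuous_on {0..1} (G j)"
  shows "product_defect n (\<lambda>t. \<Sum>i\<in>I. a i * F i t) (\<lambda>t. \<Sum>j\<in>J. b j * G j t)
           (\<Sum>i\<in>I. a i * dF i) (\<Sum>j\<in>J. b j * dG j) z
       = (\<Sum>i\<in>I. \<Sum>j\<in>J. a i * b j * product_defect n (F i) (G j) (dF i) (dG j) z)"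
proof -
  let ?c = "2 * z * (1 - z)"
  let ?X = "\<lambda>i j. a i * (b j * gbd n (\<lambda>t. F i t * G j t) z)"
  let ?Y = "\<lambda>i j. (a i * gbd n (F i) z) * (b j * gbd n (G j) z)"
  let ?Z = "\<lambda>i j. (a i * dF i) * (b j * dG j)"
  have "(\<lambda>t. (\<Sum>i\<in>I. a i * F i t) * (\<Sum>j\<in>J. b j * G j t))
      = (\<lambda>t. \<Sum>i\<in>I. a i * (\<Sum>j\<in>J. b j * (F i t * G j t)))"
    unfolding sum_product by (simp only: sum_distrib_left mult_ac)
  then have "gbd n (\<lambda>t. (\<Sum>i\<in>I. a i * F i t) * (\<Sum>j\<in>J. b j * G j t)) z
      = (\<Sum>i\<in>I. a i * gbd n (\<lambda>t. \<Sum>j\<in>J. b j * (F i t * G j t)) z)"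
    using assms by (simp only:) (rule gbd_sum_cmult, auto intro!: continuous_intros)
  also have "\<dots> = (\<Sum>i\<in>I. \<Sum>j\<in>J. ?X i j)"
  proof (rule sum.cong[OF refl])
    fix i assume "i \<in> I"
    then show "a i * gbd n (\<lambda>t. \<Sum>j\<in>J. b j * (F i t * G j t)) z = (\<Sum>j\<in>J. ?X i j)"
      using assms by (subst gbd_sum_cmult) (auto simp: sum_distrib_left intro!: continuous_intros)
  qed
  moreover have "(\<Sum>i\<in>I. \<Sum>j\<in>J. a i * b j * product_defect n (F i) (G j) (dF i) (dG j) z)
      = (\<Sum>i\<in>I. \<Sum>j\<in>J. ?X i j - ?Y i j - ?c * ?Z i j / of_nat n)"
    unfolding product_defect_def by (intro sum.cong refl) (simp add: algebra_simps)
  moreover have "\<dots> = (\<Sum>i\<in>I. \<Sum>j\<in>J. ?X i j) - (\<Sum>i\<in>I. \<Sum>j\<in>J. ?Y i j)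
                     - ?c * (\<Sum>i\<in>I. \<Sum>j\<in>J. ?Z i j) / of_nat n"
    by (simp only: sum_subtractf sum_divide_distrib[symmetric] sum_distrib_left[symmetric])
  ultimately show ?thesis
    using assms unfolding product_defect_def sum_product[symmetric]
    by (simp add: gbd_sum_cmult mult.assoc)
qed

lemma norm_product_defect_poly_le:
  assumes n: "n \<ge> 1" and z: "norm z \<le> r" and r: "1 \<le> r"
  shows "norm (product_defect n (\<lambda>t. \<Sum>k<N. a k * of_real t ^ k) (\<lambda>t. \<Sum>j<N. b j * of_real t ^ j)
                 (\<Sum>k<N. a k * (of_nat k * z ^ (k - 1))) (\<Sum>j<N. b j * (of_nat j * z ^ (j - 1))) z)
         \<le> 44 * (\<Sum>k<N. norm (a k) * (real k + 1) ^ 6 * r ^ k)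
              * (\<Sum>j<N. norm (b j) * (real j + 1) ^ 6 * r ^ j) / real n ^ 2"
proof -
  define W where "W k = (real k + 1) ^ 6" for k :: nat
  define D where "D k j = 44 * W k * W j * r ^ (k + j) / real n ^ 2" for k j
  have expand: "product_defect n (\<lambda>t. \<Sum>k<N. a k * of_real t ^ k) (\<lambda>t. \<Sum>j<N. b j * of_real t ^ j)
          (\<Sum>k<N. a k * (of_nat k * z ^ (k - 1))) (\<Sum>j<N. b j * (of_nat j * z ^ (j - 1))) z
      = (\<Sum>k<N. \<Sum>j<N. a k * b j * product_defect n (\<lambda>t. of_real t ^ k) (\<lambda>t. of_real t ^ j)
          (of_nat k * z ^ (k - 1)) (of_nat j * z ^ (j - 1)) z)"
    by (rule product_defect_sum[where F = "\<lambda>k t. of_real t ^ k" and G = "\<lambda>k t. of_real t ^ k"])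
      (auto intro!: continuous_intros)
  have "norm (product_defect n (\<lambda>t. \<Sum>k<N. a k * of_real t ^ k) (\<lambda>t. \<Sum>j<N. b j * of_real t ^ j)
                 (\<Sum>k<N. a k * (of_nat k * z ^ (k - 1))) (\<Sum>j<N. b j * (of_nat j * z ^ (j - 1))) z)
      \<le> (\<Sum>k<N. \<Sum>j<N. norm (a k) * norm (b j) * D k j)"
  proof -
    have "norm (product_defect n (\<lambda>t. of_real t ^ k) (\<lambda>t. of_real t ^ j)
                 (of_nat k * z ^ (k - 1)) (of_nat j * z ^ (j - 1)) z) \<le> D k j" for k j
      unfolding D_def W_def using norm_product_defect_power_le[OF n z r] by simp
    then show ?thesis
      unfolding expand
      by (intro order_trans[OF norm_sum] sum_mono order_trans[OF norm_sum])
        (auto simp: norm_mult intro!: mult_left_mono)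
  qed
  also have "\<dots> = 44 * (\<Sum>k<N. norm (a k) * W k * r ^ k) * (\<Sum>j<N. norm (b j) * W j * r ^ j) / real n ^ 2"
    by (simp add: D_def sum_distrib_left sum_distrib_right sum_divide_distrib power_add algebra_simps)
  finally show ?thesis
    unfolding W_def .
qed

section \<open>Passage to holomorphic functions\<close>

lemma norm_bern_of_real_le:
  assumes "t \<in> {0..1}"
  shows "norm (bern m i (complex_of_real t)) \<le> real (m choose i)"
proof -
  have "bern m i (complex_of_real t) = of_real (real (m choose i) * (t ^ i * (1 - t) ^ (m - i)))"
    unfolding bern_def by simp
  then have "norm (bern m i (complex_of_real t)) = real (m choose i) * (t ^ i * (1 - t) ^ (m - i))"
    using assms by (simp only: norm_of_real abs_of_nonneg) simp
  also have "\<dots> \<le> real (m choose i)"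
    using assms by (intro mult_left_le mult_le_one power_le_one) auto
  finally show ?thesis .
qed

lemma gbd_tendsto:
  assumes "\<And>N. continuous_on {0..1} (F N)"
    and "\<And>t. t \<in> {0..1} \<Longrightarrow> (\<lambda>N. F N t) \<longlonglongrightarrow> G t"
    and "\<And>N t. t \<in> {0..1} \<Longrightarrow> norm (F N t) \<le> B"
  shows "(\<lambda>N. gbd n (F N) z) \<longlonglongrightarrow> gbd n G z"
proof -
  have "(\<lambda>N. integral {0..1} (\<lambda>t. F N t * bern m i (complex_of_real t)))
      \<longlonglongrightarrow> integral {0..1} (\<lambda>t. G t * bern m i (complex_of_real t))" for m i
  proof (rule dominated_convergence(2))
    show "(\<lambda>t. F N t * bern m i (complex_of_real t)) integrable_on {0..1}" for N
      using assms(1) by (intro integrable_continuous_real continuous_intros continuous_on_bern)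
    show "(\<lambda>t::real. B * real (m choose i)) integrable_on {0..1}"
      by (intro integrable_continuous_real continuous_intros)
    show "norm (F N t * bern m i (complex_of_real t)) \<le> B * real (m choose i)" if "t \<in> {0..1}" for N t
      unfolding norm_mult using assms(3)[OF that] norm_bern_of_real_le[OF that]
      by (intro mult_mono) (auto intro: order_trans[OF norm_ge_zero])
    show "(\<lambda>N. F N t * bern m i (complex_of_real t)) \<longlonglongrightarrow> G t * bern m i (complex_of_real t)"
      if "t \<in> {0..1}" for t
      using assms(2)[OF that] by (intro tendsto_intros)
  qed
  moreover have "(\<lambda>N. F N 0) \<longlonglongrightarrow> G 0" "(\<lambda>N. F N 1) \<longlonglongrightarrow> G 1"
    by (simp_all add: assms(2))
  ultimately show ?thesis
    unfolding gbd_def by (intro tendsto_intros)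
qed

lemma product_defect_tendsto:
  assumes "\<And>N. continuous_on {0..1} (F N)" "\<And>N. continuous_on {0..1} (G N)"
    and "\<And>t. t \<in> {0..1} \<Longrightarrow> (\<lambda>N. F N t) \<longlonglongrightarrow> F' t"
    and "\<And>t. t \<in> {0..1} \<Longrightarrow> (\<lambda>N. G N t) \<longlonglongrightarrow> G' t"
    and "\<And>N t. t \<in> {0..1} \<Longrightarrow> norm (F N t) \<le> BF"
    and "\<And>N t. t \<in> {0..1} \<Longrightarrow> norm (G N t) \<le> BG"
    and "dF \<longlonglongrightarrow> dF'" "dG \<longlonglongrightarrow> dG'"
  shows "(\<lambda>N. product_defect n (F N) (G N) (dF N) (dG N) z) \<longlonglongrightarrow> product_defect n F' G' dF' dG' z"
proof -
  have "(\<lambda>N. gbd n (\<lambda>t. F N t * G N t) z) \<longlonglongrightarrow> gbd n (\<lambda>t. F' t * G' t) z"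
  proof (rule gbd_tendsto)
    show "norm (F N t * G N t) \<le> BF * BG" if "t \<in> {0..1}" for N t
      unfolding norm_mult using assms(5,6)[OF that]
      by (intro mult_mono) (auto intro: order_trans[OF norm_ge_zero])
  qed (use assms in \<open>auto intro!: continuous_intros tendsto_intros\<close>)
  moreover have "(\<lambda>N. gbd n (F N) z) \<longlonglongrightarrow> gbd n F' z" "(\<lambda>N. gbd n (G N) z) \<longlonglongrightarrow> gbd n G' z"
    using assms by (blast intro: gbd_tendsto)+
  ultimately show ?thesis
    unfolding product_defect_def divide_inverse using assms(7,8) by (intro tendsto_intros)
qed

lemma summable_power_mult_geometric:
  fixes q :: real
  assumes "0 \<le> q" "q < 1"
  shows "summable (\<lambda>k. (real k + 1) ^ p * q ^ k)"
proof -
  have "(\<lambda>k. ((real k + 1) / (real k + 2)) ^ p) \<longlonglongrightarrow> 1 ^ p"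
    by (intro tendsto_power) real_asymp
  then have "(\<lambda>k. norm ((real k + 1) ^ p) / norm ((real (Suc k) + 1) ^ p)) \<longlonglongrightarrow> 1"
    by (simp add: power_divide add_ac)
  then have "conv_radius (\<lambda>k. (real k + 1) ^ p) = ereal 1"
    by (intro conv_radius_ratio_limit_nonzero[OF refl]) simp_all
  then show ?thesis
    using assms by (intro summable_in_conv_radius) simp
qed

definition taylor_coeff :: "(complex \<Rightarrow> complex) \<Rightarrow> nat \<Rightarrow> complex" where
  "taylor_coeff f k = (deriv ^^ k) f 0 / fact k"

lemma summable_norm_taylor_coeff_weighted:
  assumes "f holomorphic_on ball 0 R" "0 \<le> r" "r < R"
  shows "summable (\<lambda>k. norm (taylor_coeff f k) * (real k + 1) ^ p * r ^ k)"
proof -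
  define \<rho> where "\<rho> = (r + R) / 2"
  have \<rho>: "r < \<rho>" "\<rho> < R"
    using assms by (auto simp: \<rho>_def)
  have cont: "continuous_on (cball 0 \<rho>) f"
    using \<rho> by (intro continuous_on_subset[OF holomorphic_on_imp_continuous_on[OF assms(1)]]) auto
  then have "bounded (f ` sphere 0 \<rho>)"
    by (intro compact_imp_bounded compact_continuous_image continuous_on_subset[OF cont]) auto
  then obtain B where "\<forall>x\<in>f ` sphere 0 \<rho>. norm x \<le> B"
    by (auto simp: bounded_iff)
  then have B: "\<And>w. norm (0 - w) = \<rho> \<Longrightarrow> norm (f w) \<le> B"
    by auto
  have "norm ((deriv ^^ k) f 0) \<le> fact k * B / \<rho> ^ k" for k
    using \<rho> assms by (intro Cauchy_inequality holomorphic_on_subset[OF assms(1)] cont B) auto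
  then have coeff: "norm (taylor_coeff f k) \<le> B / \<rho> ^ k" for k
    unfolding taylor_coeff_def by (simp add: norm_divide field_simps)
  show ?thesis
  proof (rule summable_comparison_test')
    show "summable (\<lambda>k. B * ((real k + 1) ^ p * (r / \<rho>) ^ k))"
      using \<rho> assms by (intro summable_mult summable_power_mult_geometric) auto
    have "norm (taylor_coeff f k) * ((real k + 1) ^ p * r ^ k) \<le> B / \<rho> ^ k * ((real k + 1) ^ p * r ^ k)" for k
      using assms by (intro mult_right_mono coeff) auto
    then show "norm (norm (taylor_coeff f k) * (real k + 1) ^ p * r ^ k)
                 \<le> B * ((real k + 1) ^ p * (r / \<rho>) ^ k)" for k
      using \<rho> assms by (simp add: power_divide field_simps)
  qed
qed

lemma taylor_series_tendsto:
  assumes "f holomorphic_on ball 0 R" "w \<in> ball 0 R"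
  shows "(\<lambda>N. \<Sum>k<N. taylor_coeff f k * w ^ k) \<longlonglongrightarrow> f w"
  using holomorphic_power_series[OF assms] by (simp add: sums_def taylor_coeff_def)

lemma taylor_series_deriv_tendsto:
  assumes "f holomorphic_on ball 0 R" "w \<in> ball 0 R"
  shows "(\<lambda>N. \<Sum>k<N. taylor_coeff f k * (of_nat k * w ^ (k - 1))) \<longlonglongrightarrow> deriv f w"
proof (rule LIMSEQ_imp_Suc)
  have "deriv f holomorphic_on ball 0 R"
    using assms(1) by (rule holomorphic_deriv) simp
  from taylor_series_tendsto[OF this assms(2)]
  have "(\<lambda>N. \<Sum>k<N. taylor_coeff f (Suc k) * (of_nat (Suc k) * w ^ k)) \<longlonglongrightarrow> deriv f w"
    by (simp add: taylor_coeff_def funpow_Suc_right del: funpow.simps of_nat_Suc)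
  then show "(\<lambda>N. \<Sum>k<Suc N. taylor_coeff f k * (of_nat k * w ^ (k - 1))) \<longlonglongrightarrow> deriv f w"
    by (subst sum.lessThan_Suc_shift) simp
qed

lemma norm_partial_sum_of_real_le:
  assumes "summable (\<lambda>k. norm (a k :: complex))" "t \<in> {0..1}"
  shows "norm (\<Sum>k<N. a k * of_real t ^ k) \<le> (\<Sum>k. norm (a k))"
proof -
  have "norm (\<Sum>k<N. a k * of_real t ^ k) \<le> (\<Sum>k<N. norm (a k))"
    using assms(2) by (intro order_trans[OF norm_sum] sum_mono)
      (simp add: norm_mult norm_power mult_left_le power_le_one)
  also have "\<dots> \<le> (\<Sum>k. norm (a k))"
    using assms(1) by (intro sum_le_suminf) auto
  finally show ?thesis .
qed

lemma product_defect_taylor_tendsto: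
  assumes "f holomorphic_on ball 0 R" "g holomorphic_on ball 0 R" "1 < R" "z \<in> ball 0 R"
  shows "(\<lambda>N. product_defect n (\<lambda>t. \<Sum>k<N. taylor_coeff f k * of_real t ^ k)
                               (\<lambda>t. \<Sum>k<N. taylor_coeff g k * of_real t ^ k)
                               (\<Sum>k<N. taylor_coeff f k * (of_nat k * z ^ (k - 1)))
                               (\<Sum>k<N. taylor_coeff g k * (of_nat k * z ^ (k - 1))) z)
         \<longlonglongrightarrow> product_defect n (\<lambda>t. f (of_real t)) (\<lambda>t. g (of_real t)) (deriv f z) (deriv g z) z"
proof (rule product_defect_tendsto)
  have "summable (\<lambda>k. norm (taylor_coeff h k))" if "h holomorphic_on ball 0 R" for h
    using summable_norm_taylor_coeff_weighted[OF that, of 1 0] assms(3) by simp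
  then show "norm (\<Sum>k<N. taylor_coeff f k * of_real t ^ k) \<le> (\<Sum>k. norm (taylor_coeff f k))"
    and "norm (\<Sum>k<N. taylor_coeff g k * of_real t ^ k) \<le> (\<Sum>k. norm (taylor_coeff g k))"
    if "t \<in> {0..1}" for N t
    using that assms(1,2) by (blast intro: norm_partial_sum_of_real_le)+
  have "complex_of_real t \<in> ball 0 R" if "t \<in> {0..1}" for t
    using that assms(3) by auto
  then show "(\<lambda>N. \<Sum>k<N. taylor_coeff f k * of_real t ^ k) \<longlonglongrightarrow> f (of_real t)"
    and "(\<lambda>N. \<Sum>k<N. taylor_coeff g k * of_real t ^ k) \<longlonglongrightarrow> g (of_real t)"
    if "t \<in> {0..1}" for t
    using that assms(1,2) by (blast intro: taylor_series_tendsto)+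
  show "(\<lambda>N. \<Sum>k<N. taylor_coeff f k * (of_nat k * z ^ (k - 1))) \<longlonglongrightarrow> deriv f z"
    and "(\<lambda>N. \<Sum>k<N. taylor_coeff g k * (of_nat k * z ^ (k - 1))) \<longlonglongrightarrow> deriv g z"
    using assms by (blast intro: taylor_series_deriv_tendsto)+
qed (auto intro!: continuous_intros)

theorem theorem5p2:
  fixes f g :: "complex \<Rightarrow> complex" and r R :: real
  assumes "1 \<le> r" and "r < R"
    and "f holomorphic_on ball 0 R" and "g holomorphic_on ball 0 R"
  shows "\<exists>C. \<forall>n::nat. n \<ge> 1 \<longrightarrow> (\<forall>z. norm z \<le> r \<longrightarrow>
           norm (gbd n (\<lambda>t. f (of_real t) * g (of_real t)) z
                 - gbd n (\<lambda>t. f (of_real t)) z * gbd n (\<lambda>t. g (of_real t)) z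
                 - 2 * z * (1 - z) * deriv f z * deriv g z / of_nat n)
           \<le> C / (real n)^2)"
proof -
  define W where "W h = (\<Sum>k. norm (taylor_coeff h k) * (real k + 1) ^ 6 * r ^ k)" for h
  have W: "(\<Sum>k<N. norm (taylor_coeff h k) * (real k + 1) ^ 6 * r ^ k) \<le> W h" "0 \<le> W h"
    if "h holomorphic_on ball 0 R" for h N
    unfolding W_def using assms(1,2) summable_norm_taylor_coeff_weighted[OF that, of r 6]
    by (auto intro!: sum_le_suminf suminf_nonneg)
  show ?thesis
  proof (intro exI[of _ "44 * W f * W g"] allI impI)
    fix n :: nat and z :: complex
    assume n: "n \<ge> 1" and z: "norm z \<le> r"
    define P where "P h N t = (\<Sum>k<N. taylor_coeff h k * of_real t ^ k)" for h N t
    define D where "D h N = (\<Sum>k<N. taylor_coeff h k * (of_nat k * z ^ (k - 1)))" for h N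
    have "(\<lambda>N. norm (product_defect n (P f N) (P g N) (D f N) (D g N) z))
        \<longlonglongrightarrow> norm (product_defect n (\<lambda>t. f (of_real t)) (\<lambda>t. g (of_real t)) (deriv f z) (deriv g z) z)"
      unfolding P_def D_def using assms z
      by (intro tendsto_norm product_defect_taylor_tendsto[OF assms(3,4)]) auto
    moreover have "norm (product_defect n (P f N) (P g N) (D f N) (D g N) z) \<le> 44 * W f * W g / real n ^ 2" for N
      unfolding P_def D_def using W[OF assms(3)] W[OF assms(4)] assms(1)
      by (intro order_trans[OF norm_product_defect_poly_le[OF n z assms(1)]] divide_right_mono
          mult_mono mult_left_mono) (auto intro!: sum_nonneg)
    ultimately show "norm (gbd n (\<lambda>t. f (of_real t) * g (of_real t)) z
                 - gbd n (\<lambda>t. f (of_real t)) z * gbd n (\<lambda>t. g (of_real t)) z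
                 - 2 * z * (1 - z) * deriv f z * deriv g z / of_nat n) \<le> 44 * W f * W g / (real n)^2"
      unfolding product_defect_def[symmetric] by (intro LIMSEQ_le_const2) auto
  qed
qed

end
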